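(* There is no sequence of maps $\varphi_0,\varphi_1,\varphi_2,\ldots$, each defined on the ideal $\mathcal{M}$ of meager subsets of $\mathbb{R}$ and taking values in the family of closed nowhere dense subsets of $\mathbb{R}$, such that both of the following hold: (a) $A\subseteq\bigcup_{i<\omega}\varphi_i(A)$ for every meager $A\subseteq\mathbb{R}$; (b) $\varphi_i(A+r)=\varphi_i(A)+r$ for every meager $A$, every $r\in\mathbb{R}$ and every $i<\omega$.
   Context: $A+r=\{a+r:a\in A\}$. *)

theory Defs
  imports "HOL-Analysis.Analysis"
begin

definition nowhere_dense :: "real set \<Rightarrow> bool" where
  "nowhere_dense S \<longleftrightarrow> interior (closure S) = {}"

definition meager :: "real set \<Rightarrow> bool" where
  "meager A \<longleftrightarrow> (\<exists>N :: nat \<Rightarrow> real set. (\<forall>n. nowhere_dense (N n)) \<and> A \<subseteq> (\<Union>n. N n))"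

definition translate :: "real set \<Rightarrow> real \<Rightarrow> real set" where
  "translate A r = (\<lambda>a. a + r) ` A"

end

theory Submission
  imports Defs
begin

text \<open>The rationals form a meager set, so some \<open>\<phi> i \<rat>\<close> is nonempty. Translation
  equivariance together with \<open>\<rat> + q = \<rat>\<close> makes \<open>\<phi> i \<rat>\<close> invariant under all rational
  translations; a nonempty closed set with this property contains a dense coset \<open>x + \<rat>\<close>,
  hence is all of \<open>\<real>\<close>, which is not nowhere dense.\<close>

lemma countable_imp_meager:
  assumes "countable A"
  shows "meager A"
proof -
  define N where "N = (\<lambda>n. {from_nat_into (insert 0 A) n})"
  have "nowhere_dense (N n)" for n
    unfolding N_def nowhere_dense_def by simp
  moreover have "A \<subseteq> (\<Union>n. N n)"
  proof -
    have "range (from_nat_into (insert 0 A)) = insert 0 A"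
      using assms by (simp add: range_from_nat_into)
    then show ?thesis
      unfolding N_def by blast
  qed
  ultimately show ?thesis
    unfolding meager_def by blast
qed

lemma translate_Rats:
  assumes "q \<in> \<rat>"
  shows "translate \<rat> q = \<rat>"
proof
  show "translate \<rat> q \<subseteq> \<rat>"
    unfolding translate_def using assms by auto
  show "\<rat> \<subseteq> translate \<rat> q"
  proof
    fix y :: real
    assume "y \<in> \<rat>"
    then have "y - q \<in> \<rat>"
      using assms by simp
    then show "y \<in> translate \<rat> q"
      unfolding translate_def by (rule rev_image_eqI) simp
  qed
qed

lemma closed_Rats_translation_invariant_eq_UNIV:
  assumes "closed S" and "x \<in> S" and invariant: "\<And>q. q \<in> \<rat> \<Longrightarrow> translate S q \<subseteq> S"
  shows "S = UNIV"
proof -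
  have "(+) x ` \<rat> \<subseteq> S"
    using assms(2) invariant unfolding translate_def by (auto simp: add.commute)
  then have "closure ((+) x ` \<rat>) \<subseteq> S"
    using \<open>closed S\<close> by (rule closure_minimal)
  moreover have "closure ((+) x ` \<rat>) = UNIV"
    by (simp add: closure_translation Rats_closure_real surj_plus)
  ultimately show ?thesis
    by blast
qed

lemma not_nowhere_dense_UNIV: "\<not> nowhere_dense UNIV"
  by (simp add: nowhere_dense_def)

theorem mainTheorem1:
  shows "\<not> (\<exists>\<phi> :: nat \<Rightarrow> real set \<Rightarrow> real set.
            (\<forall>i A. meager A \<longrightarrow> closed (\<phi> i A) \<and> nowhere_dense (\<phi> i A))
          \<and> (\<forall>A. meager A \<longrightarrow> A \<subseteq> (\<Union>i. \<phi> i A))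
          \<and> (\<forall>i A r. meager A \<longrightarrow> \<phi> i (translate A r) = translate (\<phi> i A) r))"
proof
  assume "\<exists>\<phi> :: nat \<Rightarrow> real set \<Rightarrow> real set.
            (\<forall>i A. meager A \<longrightarrow> closed (\<phi> i A) \<and> nowhere_dense (\<phi> i A))
          \<and> (\<forall>A. meager A \<longrightarrow> A \<subseteq> (\<Union>i. \<phi> i A))
          \<and> (\<forall>i A r. meager A \<longrightarrow> \<phi> i (translate A r) = translate (\<phi> i A) r)"
  then obtain \<phi> :: "nat \<Rightarrow> real set \<Rightarrow> real set" where
      nowhere_dense_closed: "\<And>i A. meager A \<Longrightarrow> closed (\<phi> i A) \<and> nowhere_dense (\<phi> i A)"
    and covers: "\<And>A. meager A \<Longrightarrow> A \<subseteq> (\<Union>i. \<phi> i A)"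
    and equivariant: "\<And>i A r. meager A \<Longrightarrow> \<phi> i (translate A r) = translate (\<phi> i A) r"
    by blast
  have meager_Rats: "meager \<rat>"
    by (simp add: countable_imp_meager countable_rat)
  obtain i x where "x \<in> \<phi> i \<rat>"
    using covers[OF meager_Rats] Rats_0 by blast
  moreover have "translate (\<phi> i \<rat>) q \<subseteq> \<phi> i \<rat>" if "q \<in> \<rat>" for q
    using equivariant[OF meager_Rats, of i q] translate_Rats[OF that] by simp
  ultimately have "\<phi> i \<rat> = UNIV"
    using nowhere_dense_closed[OF meager_Rats] closed_Rats_translation_invariant_eq_UNIV by blast
  then show False
    using nowhere_dense_closed[OF meager_Rats] not_nowhere_dense_UNIV by metis
qed

end
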